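(* Let $G$ be a finite group and $K$ an idempotent semifield. Let $V$ and $W$ be indecomposable representations of $G$ over $K$, and let $H_V$ and $H_W$ be subgroups of $G$ corresponding to $V$ and $W$ respectively (i.e. $H_V$ is the stabilizer in $G$ of some basis line of $V$, and $H_W$ the stabilizer of some basis line of $W$). Then the set of homomorphisms of representations $\phi:V\to W$ is in bijective correspondence with the set of all functions $H_V\backslash G/H_W\to K$, where $H_V\backslash G/H_W$ denotes the set of double cosets $H_V g H_W$, $g\in G$.
   Context: All semirings are commutative. A semifield is a semiring $K$ with $K\setminus\{0\}$ a multiplicative group; it is idempotent if $a+a=a$ for all $a$. A representation of $G$ over $K$ is a $K$-linear action of $G$ on a free module $K^n$ (equivalently a group homomorphism $G\to\mathrm{GL}_n(K)$). A homomorphism of representations $\phi:V\to W$ is a $K$-module homomorphism with $\phi(gv)=g\phi(v)$ for all $g\in G$, $v\in V$. A representation is indecomposable if it is not a direct sum of two nontrivial $G$-stable submodules. A basis line of a free $K$-module is a submodule spanned by one vector of a basis; the set of basis lines is independent of the basis and $G$ acts on it by $g\cdot\mathrm{span}(v)=\mathrm{span}(gv)$. *)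

theory Defs
  imports "HOL-Algebra.Group" "HOL-Library.FuncSet"
begin

text \<open>Idempotent semifield structure on a commutative semiring type 'k
  (0 \<noteq> 1 is already part of comm_semiring_1).\<close>
definition idempotent_semifield :: "'k::comm_semiring_1 itself \<Rightarrow> bool" where
  "idempotent_semifield _ \<longleftrightarrow>
     (\<forall>a::'k. a \<noteq> 0 \<longrightarrow> (\<exists>b. a * b = 1)) \<and> (\<forall>a::'k. a + a = a)"

definition vadd :: "('n \<Rightarrow> 'k::comm_semiring_1) \<Rightarrow> ('n \<Rightarrow> 'k) \<Rightarrow> ('n \<Rightarrow> 'k)" where
  "vadd u v = (\<lambda>i. u i + v i)"

definition vsmult :: "'k::comm_semiring_1 \<Rightarrow> ('n \<Rightarrow> 'k) \<Rightarrow> ('n \<Rightarrow> 'k)" where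
  "vsmult c v = (\<lambda>i. c * v i)"

definition vzero :: "'n \<Rightarrow> 'k::comm_semiring_1" where
  "vzero = (\<lambda>i. 0)"

definition klinear :: "(('n \<Rightarrow> 'k::comm_semiring_1) \<Rightarrow> ('m \<Rightarrow> 'k)) \<Rightarrow> bool" where
  "klinear f \<longleftrightarrow> (\<forall>u v. f (vadd u v) = vadd (f u) (f v)) \<and> (\<forall>c v. f (vsmult c v) = vsmult c (f v))"

definition representation ::
  "('g, 'b) monoid_scheme \<Rightarrow> ('g \<Rightarrow> ('n::finite \<Rightarrow> 'k::comm_semiring_1) \<Rightarrow> ('n \<Rightarrow> 'k)) \<Rightarrow> bool" where
  "representation G act \<longleftrightarrow>
     (\<forall>g\<in>carrier G. klinear (act g)) \<and>
     act \<one>\<^bsub>G\<^esub> = id \<and>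
     (\<forall>g\<in>carrier G. \<forall>h\<in>carrier G. act (g \<otimes>\<^bsub>G\<^esub> h) = act g \<circ> act h)"

definition submodule :: "('n \<Rightarrow> 'k::comm_semiring_1) set \<Rightarrow> bool" where
  "submodule S \<longleftrightarrow> vzero \<in> S \<and> (\<forall>u\<in>S. \<forall>v\<in>S. vadd u v \<in> S) \<and> (\<forall>c. \<forall>v\<in>S. vsmult c v \<in> S)"

definition G_stable ::
  "('g, 'b) monoid_scheme \<Rightarrow> ('g \<Rightarrow> ('n \<Rightarrow> 'k) \<Rightarrow> ('n \<Rightarrow> 'k)) \<Rightarrow> ('n \<Rightarrow> 'k) set \<Rightarrow> bool" where
  "G_stable G act S \<longleftrightarrow> (\<forall>g\<in>carrier G. act g ` S \<subseteq> S)"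

definition is_direct_sum :: "('n \<Rightarrow> 'k::comm_semiring_1) set \<Rightarrow> ('n \<Rightarrow> 'k) set \<Rightarrow> bool" where
  "is_direct_sum S T \<longleftrightarrow> (\<forall>v. \<exists>!p. fst p \<in> S \<and> snd p \<in> T \<and> v = vadd (fst p) (snd p))"

definition indecomposable_rep ::
  "('g, 'b) monoid_scheme \<Rightarrow> ('g \<Rightarrow> ('n::finite \<Rightarrow> 'k::comm_semiring_1) \<Rightarrow> ('n \<Rightarrow> 'k)) \<Rightarrow> bool" where
  "indecomposable_rep G act \<longleftrightarrow> representation G act \<and>
     \<not> (\<exists>S T. submodule S \<and> submodule T \<and> S \<noteq> {vzero} \<and> T \<noteq> {vzero} \<and>
              G_stable G act S \<and> G_stable G act T \<and> is_direct_sum S T)"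

text \<open>The basis line spanned by the i-th standard basis vector (the set of basis lines
  does not depend on the chosen basis).\<close>
definition basis_line :: "'n \<Rightarrow> ('n \<Rightarrow> 'k::comm_semiring_1) set" where
  "basis_line i = {vsmult c (\<lambda>j. if j = i then 1 else 0) | c. True}"

definition line_stabilizers ::
  "('g, 'b) monoid_scheme \<Rightarrow> ('g \<Rightarrow> ('n::finite \<Rightarrow> 'k::comm_semiring_1) \<Rightarrow> ('n \<Rightarrow> 'k)) \<Rightarrow> 'g set set" where
  "line_stabilizers G act =
     {{g \<in> carrier G. act g ` basis_line i = basis_line i} | i. True}"

definition rep_homs ::
  "('g, 'b) monoid_scheme \<Rightarrow> ('g \<Rightarrow> ('n \<Rightarrow> 'k::comm_semiring_1) \<Rightarrow> ('n \<Rightarrow> 'k))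
     \<Rightarrow> ('g \<Rightarrow> ('m \<Rightarrow> 'k) \<Rightarrow> ('m \<Rightarrow> 'k)) \<Rightarrow> (('n \<Rightarrow> 'k) \<Rightarrow> ('m \<Rightarrow> 'k)) set" where
  "rep_homs G actV actW =
     {\<phi>. klinear \<phi> \<and> (\<forall>g\<in>carrier G. \<forall>v. \<phi> (actV g v) = actW g (\<phi> v))}"

definition double_coset :: "('g, 'b) monoid_scheme \<Rightarrow> 'g set \<Rightarrow> 'g \<Rightarrow> 'g set \<Rightarrow> 'g set" where
  "double_coset G H g K = {h \<otimes>\<^bsub>G\<^esub> g \<otimes>\<^bsub>G\<^esub> k | h k. h \<in> H \<and> k \<in> K}"

definition double_cosets :: "('g, 'b) monoid_scheme \<Rightarrow> 'g set \<Rightarrow> 'g set \<Rightarrow> 'g set set" where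
  "double_cosets G H K = (\<lambda>g. double_coset G H g K) ` carrier G"

end

theory Submission
  imports Defs "HOL-Algebra.Multiplicative_Group"
begin

text \<open>Over an idempotent semifield nothing cancels, so every invertible linear map of \<open>K\<^sup>n\<close> is
  monomial, and since the unit group is torsion free, the stabilizer of a basis line \<open>K e\<^sub>i\<close>
  fixes \<open>e\<^sub>i\<close> itself. For an indecomposable representation the group permutes the basis
  lines transitively: the indices reached from one line span a stable coordinate subspace with a
  stable complement. Hence \<open>V\<close> is the permutation representation on \<open>G/H\<^sub>V\<close>, every vector
  being \<open>\<Sum>\<^sub>x (x\<inverse>v)\<^sub>i x e\<^sub>i\<close>. A homomorphism \<open>\<phi>\<close> is thus determined by \<open>\<phi> e\<^sub>i\<close>, which can be
  any \<open>H\<^sub>V\<close>-fixed vector of \<open>W\<close> (Frobenius reciprocity); applying the same decomposition to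
  \<open>W\<close>, an \<open>H\<^sub>V\<close>-fixed \<open>w\<close> corresponds to the function \<open>x \<mapsto> (x\<inverse>w)\<^sub>j\<close>, and these are exactly
  the functions on \<open>G\<close> that are left \<open>H\<^sub>V\<close>- and right \<open>H\<^sub>W\<close>-invariant, i.e. functions on the
  double cosets.\<close>

section \<open>Idempotent semifields\<close>

context
  assumes semifield: "idempotent_semifield TYPE('k::comm_semiring_1)"
begin

lemma semifield_inverse: "(a::'k) \<noteq> 0 \<Longrightarrow> \<exists>b. a * b = 1"
  using semifield unfolding idempotent_semifield_def by blast

lemma semifield_add_idem: "(a::'k) + a = a"
  using semifield unfolding idempotent_semifield_def by blast

lemma semifield_add_eq_0D:
  assumes "(a::'k) + b = 0"
  shows "a = 0"
proof -
  have "a = a + (a + b)" using assms by simp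
  also have "\<dots> = (a + a) + b" by (simp add: add.assoc)
  also have "\<dots> = 0" using assms by (simp add: semifield_add_idem)
  finally show ?thesis .
qed

lemma semifield_sum_eq_0D:
  assumes "finite A" "sum f A = (0::'k)" "x \<in> A"
  shows "f x = 0"
  using assms by (simp add: sum.remove semifield_add_eq_0D)

lemma semifield_mult_eq_0_iff: "(a::'k) * b = 0 \<longleftrightarrow> a = 0 \<or> b = 0"
proof (cases "a = 0")
  case False
  then obtain a' where "a' * a = 1" using semifield_inverse by (metis mult.commute)
  then have "b = a' * (a * b)" by (simp add: mult.assoc[symmetric])
  then show ?thesis using False by auto
qed simp

text \<open>The unit group of an idempotent semifield is torsion free: if \<open>a ^ N = 1\<close> then
  \<open>s = 1 + a + \<dots> + a ^ (N - 1)\<close> satisfies \<open>s * a = s\<close>, and \<open>s \<noteq> 0\<close> since sums are zero-sum free.\<close>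
lemma semifield_power_eq_1:
  assumes "(a::'k) ^ N = 1" "N > 0"
  shows "a = 1"
proof -
  obtain n where N: "N = Suc n" using assms(2) gr0_implies_Suc by blast
  define s where "s = (\<Sum>k<N. a ^ k)"
  have s: "s = 1 + (\<Sum>k<n. a ^ Suc k)"
    unfolding s_def N sum.lessThan_Suc_shift by simp
  have "s * a = (\<Sum>k<n. a ^ Suc k) + a ^ N"
    unfolding s_def sum_distrib_right N by (simp add: mult.commute)
  also have "\<dots> = s * 1" using assms(1) s by (simp add: add.commute)
  finally have "s * a = s * 1" .
  moreover have "s \<noteq> 0" using s semifield_add_eq_0D by force
  then obtain s' where "s' * s = 1" using semifield_inverse by (metis mult.commute)
  ultimately show ?thesis by (metis mult.assoc mult_1)
qed

end

lemma sum_idem_value: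
  fixes f :: "'x \<Rightarrow> 'a::comm_monoid_add"
  assumes "finite A" "a + a = a" "\<forall>x\<in>A. f x = 0 \<or> f x = a" "x0 \<in> A" "f x0 = a"
  shows "sum f A = a"
proof -
  have "sum f B \<in> {0, a}" if "B \<subseteq> A" for B
    using finite_subset[OF that assms(1)] that
    by (induction B rule: finite_induct) (use assms(2,3) in auto)
  then have "sum f (A - {x0}) \<in> {0, a}" by blast
  then show ?thesis using assms by (auto simp: sum.remove)
qed

section \<open>Linear maps of free modules\<close>

definition unit_vec :: "'n \<Rightarrow> 'n \<Rightarrow> 'k::comm_semiring_1" where
  "unit_vec i = (\<lambda>j. if j = i then 1 else 0)"

definition vsum :: "('x \<Rightarrow> 'n \<Rightarrow> 'k::comm_semiring_1) \<Rightarrow> 'x set \<Rightarrow> 'n \<Rightarrow> 'k" where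
  "vsum f A = (\<lambda>j. \<Sum>x\<in>A. f x j)"

lemma vsmult_unit_vec_apply [simp]: "vsmult c (unit_vec i) j = (if j = i then c else 0)"
  by (simp add: vsmult_def unit_vec_def)

lemma vsmult_vsmult: "vsmult a (vsmult b v) = vsmult (a * b) v"
  by (simp add: vsmult_def mult.assoc)

lemma vsmult_one [simp]: "vsmult 1 v = v"
  by (simp add: vsmult_def)

lemma basis_line_eq: "basis_line i = range (\<lambda>c. vsmult c (unit_vec i))"
  by (auto simp: basis_line_def unit_vec_def)

lemma vsmult_unit_vec_eq_iff:
  "c \<noteq> 0 \<Longrightarrow> vsmult c (unit_vec i) = vsmult d (unit_vec j) \<longleftrightarrow> i = j \<and> c = d"
  by (metis vsmult_unit_vec_apply)

lemma klinear_vadd: "klinear f \<Longrightarrow> f (vadd u v) = vadd (f u) (f v)"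
  unfolding klinear_def by blast

lemma klinear_vsmult: "klinear f \<Longrightarrow> f (vsmult c v) = vsmult c (f v)"
  unfolding klinear_def by blast

lemma klinear_vzero:
  assumes "klinear f"
  shows "f vzero = vzero"
proof -
  have "vzero = vsmult 0 vzero" by (simp add: vzero_def vsmult_def)
  then have "f vzero = vsmult 0 (f vzero)" by (metis klinear_vsmult[OF assms])
  then show ?thesis by (simp add: vzero_def vsmult_def)
qed

lemma klinear_vsum:
  assumes "klinear f" "finite A"
  shows "f (vsum g A) = vsum (\<lambda>x. f (g x)) A"
  using assms(2)
proof (induction A rule: finite_induct)
  case empty
  have "vsum g {} = vzero" "vsum (\<lambda>x. f (g x)) {} = vzero" by (auto simp: vsum_def vzero_def)
  then show ?case using klinear_vzero[OF assms(1)] by simp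
next
  case (insert x A)
  have "vsum g (insert x A) = vadd (g x) (vsum g A)"
    "vsum (\<lambda>x. f (g x)) (insert x A) = vadd (f (g x)) (vsum (\<lambda>x. f (g x)) A)"
    using insert by (auto simp: vsum_def vadd_def)
  then show ?case using insert klinear_vadd[OF assms(1)] by simp
qed

lemma vsum_unit_vec: "vsum (\<lambda>i. vsmult (v i) (unit_vec i)) UNIV = (v :: 'n::finite \<Rightarrow> 'k::comm_semiring_1)"
  by (simp add: vsum_def if_distrib cong: if_cong)

lemma klinear_apply:
  assumes "klinear f"
  shows "f (v :: 'n::finite \<Rightarrow> 'k::comm_semiring_1) j = (\<Sum>i\<in>UNIV. v i * f (unit_vec i) j)"
proof -
  have "f v = vsum (\<lambda>i. f (vsmult (v i) (unit_vec i))) UNIV"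
    by (metis klinear_vsum[OF assms finite] vsum_unit_vec)
  also have "\<dots> = vsum (\<lambda>i. vsmult (v i) (f (unit_vec i))) UNIV"
    by (simp add: klinear_vsmult[OF assms])
  finally show ?thesis by (simp add: vsum_def vsmult_def)
qed

definition coord_subspace :: "'n set \<Rightarrow> ('n \<Rightarrow> 'k::comm_semiring_1) set" where
  "coord_subspace I = {v. \<forall>l. l \<notin> I \<longrightarrow> v l = 0}"

lemma submodule_coord_subspace: "Defs.submodule (coord_subspace I)"
  unfolding Defs.submodule_def coord_subspace_def by (auto simp: vzero_def vadd_def vsmult_def)

lemma coord_subspace_ne_zero:
  assumes "i \<in> I"
  shows "coord_subspace I \<noteq> {vzero :: 'n \<Rightarrow> 'k::comm_semiring_1}"
proof
  assume "coord_subspace I = {vzero :: 'n \<Rightarrow> 'k}"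
  moreover have "(unit_vec i :: 'n \<Rightarrow> 'k) \<in> coord_subspace I"
    using assms by (simp add: coord_subspace_def unit_vec_def)
  ultimately have "(unit_vec i :: 'n \<Rightarrow> 'k) i = vzero i" by simp
  then show False by (simp add: unit_vec_def vzero_def)
qed

lemma is_direct_sum_coord_subspace:
  fixes I :: "'n set"
  shows "is_direct_sum (coord_subspace I) (coord_subspace (- I) :: ('n \<Rightarrow> 'k::comm_semiring_1) set)"
  unfolding is_direct_sum_def
proof
  fix v :: "'n \<Rightarrow> 'k"
  let ?p = "(\<lambda>l. if l \<in> I then v l else 0, \<lambda>l. if l \<in> I then 0 else v l)"
  show "\<exists>!p. fst p \<in> coord_subspace I \<and> snd p \<in> coord_subspace (- I) \<and> v = vadd (fst p) (snd p)"
  proof (rule ex1I[of _ ?p])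
    fix p assume "fst p \<in> coord_subspace I \<and> snd p \<in> coord_subspace (- I) \<and> v = vadd (fst p) (snd p)"
    then have "fst p = fst ?p" "snd p = snd ?p"
      by (auto simp: coord_subspace_def vadd_def fun_eq_iff)
    then show "p = ?p" by (simp add: prod_eq_iff)
  qed (auto simp: coord_subspace_def vadd_def)
qed

locale klinear_iso =
  fixes f g :: "('n::finite \<Rightarrow> 'k::comm_semiring_1) \<Rightarrow> ('n \<Rightarrow> 'k)"
  assumes semifield: "idempotent_semifield TYPE('k)"
    and klinear_f: "klinear f" and klinear_g: "klinear g"
    and g_f [simp]: "g (f v) = v" and f_g [simp]: "f (g v) = v"
begin

lemma klinear_iso_inverse: "klinear_iso g f"
  by unfold_locales (simp_all add: semifield klinear_f klinear_g)

text \<open>No cancellation can occur in \<open>g (f (unit_vec k)) = unit_vec k\<close>, so some \<open>g (unit_vec j)\<close>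
  with \<open>j\<close> in the support of \<open>f (unit_vec k)\<close> is a multiple of \<open>unit_vec k\<close>; applying \<open>f\<close> to it
  shows that \<open>f (unit_vec k)\<close> is a multiple of \<open>unit_vec j\<close>.\<close>
lemma image_unit_vec: "\<exists>j c. c \<noteq> 0 \<and> f (unit_vec k) = vsmult c (unit_vec j)"
proof -
  define a where "a = f (unit_vec k)"
  have expand: "unit_vec k l = (\<Sum>j\<in>UNIV. a j * g (unit_vec j) l)" for l
    unfolding a_def by (subst g_f[symmetric, of "unit_vec k"]) (rule klinear_apply[OF klinear_g])
  have "(\<Sum>j\<in>UNIV. a j * g (unit_vec j) k) \<noteq> 0"
    using expand[of k] by (simp add: unit_vec_def)
  then obtain j where j: "a j * g (unit_vec j) k \<noteq> 0"
    by (meson sum.neutral)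
  then have aj: "a j \<noteq> 0" by auto
  define \<beta> where "\<beta> = g (unit_vec j) k"
  have "g (unit_vec j) l = 0" if "l \<noteq> k" for l
  proof -
    have "(\<Sum>j\<in>UNIV. a j * g (unit_vec j) l) = 0"
      using expand[of l] that by (simp add: unit_vec_def)
    from semifield_sum_eq_0D[OF semifield finite this, of j]
    have "a j * g (unit_vec j) l = 0" by simp
    then show ?thesis using aj semifield_mult_eq_0_iff[OF semifield] by blast
  qed
  then have gj: "g (unit_vec j) = vsmult \<beta> (unit_vec k)"
    by (auto simp: \<beta>_def)
  have "unit_vec j = f (g (unit_vec j))" by simp
  also have "\<dots> = vsmult \<beta> a"
    unfolding gj a_def by (rule klinear_vsmult[OF klinear_f])
  finally have ej: "unit_vec j = vsmult \<beta> a" .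
  then have "unit_vec j j = vsmult \<beta> a j" by (rule fun_cong)
  then have "\<beta> * a j = 1" by (simp add: unit_vec_def vsmult_def)
  then obtain \<beta>' where \<beta>': "\<beta>' * \<beta> = 1"
    using semifield_inverse[OF semifield] by (metis mult.commute mult_zero_left zero_neq_one)
  have "f (unit_vec k) = vsmult \<beta>' (unit_vec j)"
    using \<beta>' by (simp add: ej vsmult_vsmult a_def)
  moreover have "\<beta>' \<noteq> 0" using \<beta>' by auto
  ultimately show ?thesis by blast
qed

lemma inverse_unit_vec:
  assumes "c \<noteq> 0" "f (unit_vec k) = vsmult c (unit_vec j)"
  shows "\<exists>c'. c' \<noteq> 0 \<and> c' * c = 1 \<and> g (unit_vec j) = vsmult c' (unit_vec k)"
proof -
  obtain c' where c': "c' * c = 1"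
    using semifield_inverse[OF semifield assms(1)] by (metis mult.commute)
  have "g (unit_vec j) = g (vsmult c' (vsmult c (unit_vec j)))"
    using c' by (simp add: vsmult_vsmult)
  also have "\<dots> = vsmult c' (unit_vec k)"
    unfolding assms(2)[symmetric] klinear_vsmult[OF klinear_g] by simp
  finally have "g (unit_vec j) = vsmult c' (unit_vec k)" .
  moreover have "c' \<noteq> 0" using c' by auto
  ultimately show ?thesis using c' by blast
qed

lemma preimage_unit_vec: "\<exists>k c. c \<noteq> 0 \<and> f (unit_vec k) = vsmult c (unit_vec j)"
proof -
  obtain k c where "c \<noteq> 0" "g (unit_vec j) = vsmult c (unit_vec k)"
    using klinear_iso.image_unit_vec[OF klinear_iso_inverse] by blast
  then show ?thesis
    using klinear_iso.inverse_unit_vec[OF klinear_iso_inverse] by blast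
qed

lemma image_unit_vec_inj:
  assumes "c \<noteq> 0" "f (unit_vec k) = vsmult c (unit_vec j)"
    and "c' \<noteq> 0" "f (unit_vec k') = vsmult c' (unit_vec j)"
  shows "k = k'"
proof -
  obtain d d' where d: "d \<noteq> 0" "g (unit_vec j) = vsmult d (unit_vec k)"
    and d': "g (unit_vec j) = vsmult d' (unit_vec k')"
    using inverse_unit_vec[OF assms(1,2)] inverse_unit_vec[OF assms(3,4)] by blast
  from d(2) d' have "vsmult d (unit_vec k) = vsmult d' (unit_vec k')" by (rule trans[OF sym])
  then show ?thesis by (subst (asm) vsmult_unit_vec_eq_iff[OF d(1)]) simp
qed

lemma apply_eq_monomial:
  assumes "c \<noteq> 0" "f (unit_vec k) = vsmult c (unit_vec j)"
  shows "f u j = c * u k"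
proof -
  have "u i * f (unit_vec i) j = (if i = k then c * u k else 0)" for i
  proof (cases "i = k")
    case False
    obtain j' c' where c': "c' \<noteq> 0" "f (unit_vec i) = vsmult c' (unit_vec j')"
      using image_unit_vec by blast
    have "j' \<noteq> j"
    proof
      assume "j' = j"
      with c' have "k = i" using image_unit_vec_inj[OF assms] by simp
      with False show False by simp
    qed
    with c' False show ?thesis by simp
  qed (simp add: assms(2) mult.commute)
  then show ?thesis by (subst klinear_apply[OF klinear_f]) simp
qed

end

section \<open>Functions on double cosets\<close>

lemma (in group) sum_carrier_left_mult:
  "a \<in> carrier G \<Longrightarrow> (\<Sum>x\<in>carrier G. f x) = (\<Sum>x\<in>carrier G. f (a \<otimes> x))"
  using sum.reindex[OF inj_on_cmult, of a f] surj_const_mult[of a] by (simp add: comp_def)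

definition biinvariant_funs :: "('g, 'b) monoid_scheme \<Rightarrow> 'g set \<Rightarrow> 'g set \<Rightarrow> ('g \<Rightarrow> 'a) set" where
  "biinvariant_funs G H K =
     {F \<in> carrier G \<rightarrow>\<^sub>E UNIV. \<forall>h\<in>H. \<forall>x\<in>carrier G. \<forall>k\<in>K. F (h \<otimes>\<^bsub>G\<^esub> x \<otimes>\<^bsub>G\<^esub> k) = F x}"

lemma bij_betw_PiE_image:
  "bij_betw (\<lambda>Q. restrict (Q \<circ> q) A) (q ` A \<rightarrow>\<^sub>E (UNIV :: 'c set))
     {F \<in> A \<rightarrow>\<^sub>E UNIV. \<forall>x\<in>A. \<forall>y\<in>A. q x = q y \<longrightarrow> F x = F y}"
  (is "bij_betw _ ?Q ?F")
proof (rule bij_betw_byWitness[where f' = "\<lambda>F. restrict (\<lambda>D. F (inv_into A q D)) (q ` A)"])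
  show "\<forall>Q\<in>?Q. restrict (\<lambda>D. restrict (Q \<circ> q) A (inv_into A q D)) (q ` A) = Q"
  proof (intro ballI ext)
    fix Q D assume Q: "Q \<in> ?Q"
    show "restrict (\<lambda>D. restrict (Q \<circ> q) A (inv_into A q D)) (q ` A) D = Q D"
      by (cases "D \<in> q ` A") (simp_all add: inv_into_into f_inv_into_f PiE_arb[OF Q])
  qed
  show "\<forall>F\<in>?F. restrict (restrict (\<lambda>D. F (inv_into A q D)) (q ` A) \<circ> q) A = F"
  proof (intro ballI ext)
    fix F x assume "F \<in> ?F"
    then have F: "F \<in> A \<rightarrow>\<^sub>E UNIV" "\<And>x y. x \<in> A \<Longrightarrow> y \<in> A \<Longrightarrow> q x = q y \<Longrightarrow> F x = F y"
      by blast+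
    show "restrict (restrict (\<lambda>D. F (inv_into A q D)) (q ` A) \<circ> q) A x = F x"
    proof (cases "x \<in> A")
      case True
      then have qx: "q x \<in> q ` A" by (rule imageI)
      have "F (inv_into A q (q x)) = F x"
        using F(2)[OF inv_into_into[OF qx] True f_inv_into_f[OF qx]] .
      with True qx show ?thesis by simp
    qed (simp add: PiE_arb[OF F(1)])
  qed
qed auto

context group
begin

lemma double_coset_mult_subset:
  assumes H: "subgroup H G" and K: "subgroup K G"
    and h: "h \<in> H" and x: "x \<in> carrier G" and k: "k \<in> K"
  shows "double_coset G H (h \<otimes> x \<otimes> k) K \<subseteq> double_coset G H x K"
proof
  fix y assume "y \<in> double_coset G H (h \<otimes> x \<otimes> k) K"
  then obtain h' k' where hk': "h' \<in> H" "k' \<in> K" and y: "y = h' \<otimes> (h \<otimes> x \<otimes> k) \<otimes> k'"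
    unfolding double_coset_def by blast
  have "h \<in> carrier G" "k \<in> carrier G" "h' \<in> carrier G" "k' \<in> carrier G"
    using h k hk' subgroup.subset[OF H] subgroup.subset[OF K] by blast+
  with x y have "y = (h' \<otimes> h) \<otimes> x \<otimes> (k \<otimes> k')" by (simp add: m_assoc)
  moreover have "h' \<otimes> h \<in> H" "k \<otimes> k' \<in> K"
    using h k hk' subgroup.m_closed[OF H] subgroup.m_closed[OF K] by blast+
  ultimately show "y \<in> double_coset G H x K"
    unfolding double_coset_def by blast
qed

lemma double_coset_mult_eq:
  assumes H: "subgroup H G" and K: "subgroup K G"
    and h: "h \<in> H" and x: "x \<in> carrier G" and k: "k \<in> K"
  shows "double_coset G H (h \<otimes> x \<otimes> k) K = double_coset G H x K"
proof
  show "double_coset G H (h \<otimes> x \<otimes> k) K \<subseteq> double_coset G H x K"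
    using double_coset_mult_subset[OF assms] .
  have hG: "h \<in> carrier G" and kG: "k \<in> carrier G"
    using h k subgroup.subset[OF H] subgroup.subset[OF K] by blast+
  then have "x = inv h \<otimes> (h \<otimes> x \<otimes> k) \<otimes> inv k"
    using x by (simp add: m_assoc) (simp add: m_assoc[symmetric])
  moreover have "double_coset G H (inv h \<otimes> (h \<otimes> x \<otimes> k) \<otimes> inv k) K \<subseteq> double_coset G H (h \<otimes> x \<otimes> k) K"
    using hG kG x by (intro double_coset_mult_subset H K subgroup.m_inv_closed h k) simp_all
  ultimately show "double_coset G H x K \<subseteq> double_coset G H (h \<otimes> x \<otimes> k) K"
    by simp
qed

lemma mem_double_coset_self:
  "subgroup H G \<Longrightarrow> subgroup K G \<Longrightarrow> x \<in> carrier G \<Longrightarrow> x \<in> double_coset G H x K"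
  unfolding double_coset_def by (force intro: subgroup.one_closed)

lemma biinvariant_funs_eq:
  assumes H: "subgroup H G" and K: "subgroup K G"
  shows "biinvariant_funs G H K =
    {F \<in> carrier G \<rightarrow>\<^sub>E UNIV. \<forall>x\<in>carrier G. \<forall>y\<in>carrier G.
       double_coset G H x K = double_coset G H y K \<longrightarrow> F x = F y}"
proof -
  have "(\<forall>h\<in>H. \<forall>x\<in>carrier G. \<forall>k\<in>K. F (h \<otimes> x \<otimes> k) = F x) \<longleftrightarrow>
      (\<forall>x\<in>carrier G. \<forall>y\<in>carrier G. double_coset G H x K = double_coset G H y K \<longrightarrow> F x = F y)"
    for F :: "'a \<Rightarrow> 'c"
  proof (intro iffI ballI impI)
    fix x y assume F: "\<forall>h\<in>H. \<forall>x\<in>carrier G. \<forall>k\<in>K. F (h \<otimes> x \<otimes> k) = F x"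
      and x: "x \<in> carrier G" and y: "y \<in> carrier G"
      and eq: "double_coset G H x K = double_coset G H y K"
    from eq mem_double_coset_self[OF H K y] obtain h k where "h \<in> H" "k \<in> K" "y = h \<otimes> x \<otimes> k"
      unfolding double_coset_def by blast
    with F x show "F x = F y" by simp
  next
    fix h x k
    assume F: "\<forall>x\<in>carrier G. \<forall>y\<in>carrier G. double_coset G H x K = double_coset G H y K \<longrightarrow> F x = F y"
      and h: "h \<in> H" and x: "x \<in> carrier G" and k: "k \<in> K"
    have "h \<otimes> x \<otimes> k \<in> carrier G"
      using h x k subgroup.subset[OF H] subgroup.subset[OF K] by blast
    with F x show "F (h \<otimes> x \<otimes> k) = F x"
      using double_coset_mult_eq[OF H K h x k] by blast
  qed
  then show ?thesis by (simp add: biinvariant_funs_def)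
qed

lemma bij_betw_double_cosets_biinvariant_funs:
  assumes "subgroup H G" "subgroup K G"
  shows "bij_betw (\<lambda>Q. restrict (\<lambda>x. Q (double_coset G H x K)) (carrier G))
     (double_cosets G H K \<rightarrow>\<^sub>E (UNIV :: 'c set)) (biinvariant_funs G H K)"
  using bij_betw_PiE_image[of "\<lambda>x. double_coset G H x K" "carrier G"]
  by (simp add: biinvariant_funs_eq[OF assms] double_cosets_def comp_def)

end

section \<open>Representations over an idempotent semifield\<close>

definition fixed_vectors :: "('g \<Rightarrow> 'v \<Rightarrow> 'v) \<Rightarrow> 'g set \<Rightarrow> 'v set" where
  "fixed_vectors act H = {w. \<forall>h\<in>H. act h w = w}"

locale semifield_rep = group G
  for G :: "('g, 'b) monoid_scheme" (structure)
    and act :: "'g \<Rightarrow> ('n::finite \<Rightarrow> 'k::comm_semiring_1) \<Rightarrow> ('n \<Rightarrow> 'k)" +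
  assumes finite_carrier: "finite (carrier G)"
    and semifield: "idempotent_semifield TYPE('k)"
    and representation: "Defs.representation G act"
    \<comment> \<open>qualified, as \<open>Multiplicative_Group\<close> also brings \<open>Real_Vector_Spaces.representation\<close>
      and \<open>Module.submodule\<close> into scope\<close>
begin

lemma act_klinear: "g \<in> carrier G \<Longrightarrow> klinear (act g)"
  using representation unfolding Defs.representation_def by blast

lemma act_one [simp]: "act \<one> = id"
  using representation unfolding Defs.representation_def by simp

lemma act_mult_comp: "g \<in> carrier G \<Longrightarrow> h \<in> carrier G \<Longrightarrow> act (g \<otimes> h) = act g \<circ> act h"
  using representation unfolding Defs.representation_def by simp

lemma act_mult: "g \<in> carrier G \<Longrightarrow> h \<in> carrier G \<Longrightarrow> act (g \<otimes> h) v = act g (act h v)"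
  by (simp add: act_mult_comp)

lemma act_inv_act [simp]: "g \<in> carrier G \<Longrightarrow> act (inv g) (act g v) = v"
  by (simp add: act_mult[symmetric])

lemma act_act_inv [simp]: "g \<in> carrier G \<Longrightarrow> act g (act (inv g) v) = v"
  by (simp add: act_mult[symmetric])

lemma act_vsmult: "g \<in> carrier G \<Longrightarrow> act g (vsmult c v) = vsmult c (act g v)"
  by (rule klinear_vsmult[OF act_klinear])

lemma act_klinear_iso: "g \<in> carrier G \<Longrightarrow> klinear_iso (act g) (act (inv g))"
  by unfold_locales (simp_all add: semifield act_klinear)

lemma act_unit_vec: "g \<in> carrier G \<Longrightarrow> \<exists>j c. c \<noteq> 0 \<and> act g (unit_vec k) = vsmult c (unit_vec j)"
  by (rule klinear_iso.image_unit_vec[OF act_klinear_iso])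

lemma act_unit_vec_preimage:
  "g \<in> carrier G \<Longrightarrow> \<exists>k c. c \<noteq> 0 \<and> act g (unit_vec k) = vsmult c (unit_vec j)"
  by (rule klinear_iso.preimage_unit_vec[OF act_klinear_iso])

lemma act_apply_monomial:
  "g \<in> carrier G \<Longrightarrow> c \<noteq> 0 \<Longrightarrow> act g (unit_vec k) = vsmult c (unit_vec j) \<Longrightarrow> act g u j = c * u k"
  by (rule klinear_iso.apply_eq_monomial[OF act_klinear_iso])

lemma act_inv_unit_vec:
  "g \<in> carrier G \<Longrightarrow> c \<noteq> 0 \<Longrightarrow> act g (unit_vec k) = vsmult c (unit_vec j) \<Longrightarrow>
    \<exists>c'. c' \<noteq> 0 \<and> c' * c = 1 \<and> act (inv g) (unit_vec j) = vsmult c' (unit_vec k)"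
  by (rule klinear_iso.inverse_unit_vec[OF act_klinear_iso])

definition line_stabilizer :: "'n \<Rightarrow> 'g set" where
  "line_stabilizer i = {g \<in> carrier G. act g ` basis_line i = basis_line i}"

lemma subgroup_line_stabilizer: "subgroup (line_stabilizer i) G"
proof (rule subgroupI)
  fix g h assume "g \<in> line_stabilizer i" "h \<in> line_stabilizer i"
  then have g: "g \<in> carrier G" "act g ` basis_line i = basis_line i"
    and h: "h \<in> carrier G" "act h ` basis_line i = basis_line i"
    by (simp_all add: line_stabilizer_def)
  have "act (g \<otimes> h) ` basis_line i = act g ` act h ` basis_line i"
    using g(1) h(1) by (simp add: act_mult_comp image_comp)
  also have "\<dots> = basis_line i" using g(2) h(2) by simp
  finally show "g \<otimes> h \<in> line_stabilizer i"
    using g(1) h(1) by (simp add: line_stabilizer_def)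
next
  fix g assume "g \<in> line_stabilizer i"
  then have g: "g \<in> carrier G" "act g ` basis_line i = basis_line i"
    by (simp_all add: line_stabilizer_def)
  have "act (inv g) ` basis_line i = act (inv g) ` act g ` basis_line i"
    using g(2) by simp
  also have "\<dots> = basis_line i"
    using g(1) by (simp add: image_image)
  finally show "inv g \<in> line_stabilizer i"
    using g(1) by (simp add: line_stabilizer_def)
qed (auto simp: line_stabilizer_def)

lemma line_stabilizer_iff:
  assumes g: "g \<in> carrier G"
  shows "g \<in> line_stabilizer i \<longleftrightarrow> (\<exists>c. c \<noteq> 0 \<and> act g (unit_vec i) = vsmult c (unit_vec i))"
proof
  assume "g \<in> line_stabilizer i"
  moreover have "unit_vec i \<in> basis_line i"
    unfolding basis_line_eq by (rule range_eqI[of _ _ 1]) simp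
  ultimately have "act g (unit_vec i) \<in> basis_line i"
    unfolding line_stabilizer_def by blast
  then obtain d where d: "act g (unit_vec i) = vsmult d (unit_vec i)"
    by (auto simp: basis_line_eq)
  obtain j c where c: "c \<noteq> 0" "act g (unit_vec i) = vsmult c (unit_vec j)"
    using act_unit_vec[OF g] by blast
  from c(2) d have "vsmult c (unit_vec j) = vsmult d (unit_vec i)"
    by (rule trans[OF sym])
  then have "j = i" by (subst (asm) vsmult_unit_vec_eq_iff[OF c(1)]) simp
  with c show "\<exists>c. c \<noteq> 0 \<and> act g (unit_vec i) = vsmult c (unit_vec i)"
    by blast
next
  assume "\<exists>c. c \<noteq> 0 \<and> act g (unit_vec i) = vsmult c (unit_vec i)"
  then obtain c c' where c: "act g (unit_vec i) = vsmult c (unit_vec i)" "c * c' = 1"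
    using semifield_inverse[OF semifield] by blast
  have image: "act g (vsmult d (unit_vec i)) = vsmult (d * c) (unit_vec i)" for d :: 'k
    by (simp add: act_vsmult[OF g] c(1) vsmult_vsmult)
  have "act g ` basis_line i = basis_line i"
  proof
    show "act g ` basis_line i \<subseteq> basis_line i"
      by (auto simp: basis_line_eq image)
    show "basis_line i \<subseteq> act g ` basis_line i"
    proof
      fix v :: "'n \<Rightarrow> 'k" assume "v \<in> basis_line i"
      then obtain d where v: "v = vsmult d (unit_vec i)"
        by (auto simp: basis_line_eq)
      have "d * c' * c = d * (c * c')" by (simp only: ac_simps)
      with v c(2) have "v = act g (vsmult (d * c') (unit_vec i))"
        by (simp add: image)
      then show "v \<in> act g ` basis_line i"
        unfolding basis_line_eq by blast
    qed
  qed
  with g show "g \<in> line_stabilizer i"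
    by (simp add: line_stabilizer_def)
qed

lemma act_nat_pow_unit_vec:
  assumes "h \<in> carrier G" "act h (unit_vec i) = vsmult c (unit_vec i)"
  shows "act (h [^] n) (unit_vec i) = vsmult (c ^ n) (unit_vec i)"
proof (induction n)
  case (Suc n)
  then show ?case
    using assms by (simp add: act_mult act_vsmult vsmult_vsmult del: vsmult_unit_vec_apply)
qed simp

lemma line_stabilizer_fixes_unit_vec:
  assumes h: "h \<in> line_stabilizer i"
  shows "act h (unit_vec i) = unit_vec i"
proof -
  have hG: "h \<in> carrier G" using h by (simp add: line_stabilizer_def)
  then obtain c where c: "act h (unit_vec i) = vsmult c (unit_vec i)"
    using h line_stabilizer_iff by blast
  have "vsmult 1 (unit_vec i) = vsmult (c ^ order G) (unit_vec i)"
    using act_nat_pow_unit_vec[OF hG c, of "order G"] by (simp add: pow_order_eq_1 hG del: vsmult_unit_vec_apply)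
  then have "c ^ order G = 1"
    by (subst (asm) vsmult_unit_vec_eq_iff) simp_all
  then have "c = 1"
    using semifield_power_eq_1[OF semifield] finite_carrier order_gt_0_iff_finite by blast
  with c show ?thesis by simp
qed

lemma act_unit_vec_apply_self:
  assumes y: "y \<in> carrier G"
  shows "act y (unit_vec i) i = (if y \<in> line_stabilizer i then 1 else 0)"
proof (cases "y \<in> line_stabilizer i")
  case True
  then show ?thesis using line_stabilizer_fixes_unit_vec[OF True] by (simp add: unit_vec_def)
next
  case False
  obtain j c where c: "c \<noteq> 0" "act y (unit_vec i) = vsmult c (unit_vec j)"
    using act_unit_vec[OF y] by blast
  with False have "j \<noteq> i" using line_stabilizer_iff[OF y] by blast
  with c False show ?thesis by simp
qed

lemma line_stabilizer_apply_self:
  assumes h: "h \<in> line_stabilizer i"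
  shows "act h v i = v i"
proof -
  have "h \<in> carrier G" using h by (simp add: line_stabilizer_def)
  with line_stabilizer_fixes_unit_vec[OF h] show ?thesis
    using act_apply_monomial[of h 1 i i] by simp
qed

definition stable_indices :: "'n set \<Rightarrow> bool" where
  "stable_indices I \<longleftrightarrow>
     (\<forall>g\<in>carrier G. \<forall>k\<in>I. \<forall>j c. c \<noteq> 0 \<and> act g (unit_vec k) = vsmult c (unit_vec j) \<longrightarrow> j \<in> I)"

lemma stable_indices_Compl:
  assumes "stable_indices I"
  shows "stable_indices (- I)"
  unfolding stable_indices_def
proof (intro ballI allI impI ComplI)
  fix g k j c
  assume g: "g \<in> carrier G" and k: "k \<in> - I" and c: "c \<noteq> 0 \<and> act g (unit_vec k) = vsmult c (unit_vec j)"
    and j: "j \<in> I"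
  obtain c' where "c' \<noteq> 0" "act (inv g) (unit_vec j) = vsmult c' (unit_vec k)"
    using act_inv_unit_vec[OF g] c by blast
  with assms g j have "k \<in> I" unfolding stable_indices_def by blast
  with k show False by simp
qed

lemma G_stable_coord_subspace:
  assumes "stable_indices I"
  shows "G_stable G act (coord_subspace I)"
  unfolding G_stable_def
proof (intro ballI subsetI)
  fix g w assume g: "g \<in> carrier G" and "w \<in> act g ` coord_subspace I"
  then obtain v where v: "v \<in> coord_subspace I" "w = act g v" by blast
  have "w l = 0" if l: "l \<notin> I" for l
  proof -
    obtain k c where c: "c \<noteq> 0" "act g (unit_vec k) = vsmult c (unit_vec l)"
      using act_unit_vec_preimage[OF g] by blast
    with assms g l have "k \<notin> I" unfolding stable_indices_def by blast
    with v(1) have "v k = 0" by (simp add: coord_subspace_def)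
    then show "w l = 0"
      using act_apply_monomial[OF g c] v(2) by simp
  qed
  then show "w \<in> coord_subspace I" by (simp add: coord_subspace_def)
qed

definition line_orbit :: "'n \<Rightarrow> 'n set" where
  "line_orbit i = {j. \<exists>g\<in>carrier G. \<exists>c. c \<noteq> 0 \<and> act g (unit_vec i) = vsmult c (unit_vec j)}"

lemma self_in_line_orbit: "i \<in> line_orbit i"
  unfolding line_orbit_def by (rule CollectI, rule bexI[of _ \<one>]) (auto intro: exI[of _ 1])

lemma stable_indices_line_orbit: "stable_indices (line_orbit i)"
  unfolding stable_indices_def
proof (intro ballI allI impI)
  fix g k j c
  assume g: "g \<in> carrier G" and "k \<in> line_orbit i"
    and c: "c \<noteq> 0 \<and> act g (unit_vec k) = vsmult c (unit_vec j)"
  then obtain g' d where g': "g' \<in> carrier G" "d \<noteq> 0" "act g' (unit_vec i) = vsmult d (unit_vec k)"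
    unfolding line_orbit_def by blast
  have "act (g \<otimes> g') (unit_vec i) = vsmult (d * c) (unit_vec j)"
    using c g g' by (simp add: act_mult act_vsmult vsmult_vsmult del: vsmult_unit_vec_apply)
  moreover have "d * c \<noteq> 0"
    using c g'(2) by (simp add: semifield_mult_eq_0_iff[OF semifield])
  moreover have "g \<otimes> g' \<in> carrier G" using g g'(1) by simp
  ultimately show "j \<in> line_orbit i"
    unfolding line_orbit_def by blast
qed

definition orbit_sum :: "('g \<Rightarrow> 'k) \<Rightarrow> ('n \<Rightarrow> 'k) \<Rightarrow> ('n \<Rightarrow> 'k)" where
  "orbit_sum F w = vsum (\<lambda>x. vsmult (F x) (act x w)) (carrier G)"

definition coeffs :: "'n \<Rightarrow> ('n \<Rightarrow> 'k) \<Rightarrow> 'g \<Rightarrow> 'k" where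
  "coeffs i v = (\<lambda>x\<in>carrier G. act (inv x) v i)"

lemma orbit_sum_cong:
  "(\<And>x. x \<in> carrier G \<Longrightarrow> F x = F' x) \<Longrightarrow> orbit_sum F w = orbit_sum F' w"
  unfolding orbit_sum_def vsum_def by (simp cong: sum.cong)

lemma orbit_sum_apply: "orbit_sum F w l = (\<Sum>x\<in>carrier G. F x * act x w l)"
  by (simp add: orbit_sum_def vsum_def vsmult_def)

lemma klinear_orbit_sum:
  "klinear \<phi> \<Longrightarrow> \<phi> (orbit_sum F w) = vsum (\<lambda>x. vsmult (F x) (\<phi> (act x w))) (carrier G)"
  unfolding orbit_sum_def by (simp add: klinear_vsum finite_carrier klinear_vsmult)

lemma act_orbit_sum:
  assumes g: "g \<in> carrier G"
  shows "act g (orbit_sum F w) = orbit_sum (\<lambda>x. F (inv g \<otimes> x)) w"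
proof -
  have "act g (orbit_sum F w) = vsum (\<lambda>x. vsmult (F x) (act g (act x w))) (carrier G)"
    using g by (simp add: klinear_orbit_sum act_klinear act_vsmult)
  also have "\<dots> = vsum (\<lambda>x. vsmult (F x) (act (g \<otimes> x) w)) (carrier G)"
    unfolding vsum_def using g by (simp add: act_mult cong: sum.cong)
  also have "\<dots> = orbit_sum (\<lambda>x. F (inv g \<otimes> x)) w"
    unfolding orbit_sum_def vsum_def
    using g by (subst sum_carrier_left_mult[of "inv g"]) (simp_all add: m_assoc[symmetric])
  finally show ?thesis .
qed

lemma coeffs_act:
  "g \<in> carrier G \<Longrightarrow> x \<in> carrier G \<Longrightarrow> coeffs i (act g v) x = coeffs i v (inv g \<otimes> x)"
  by (simp add: coeffs_def act_mult[symmetric] inv_mult_group)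

lemma coeffs_orbit_sum:
  assumes F: "F \<in> carrier G \<rightarrow>\<^sub>E UNIV" "\<And>x k. x \<in> carrier G \<Longrightarrow> k \<in> line_stabilizer i \<Longrightarrow> F (x \<otimes> k) = F x"
  shows "coeffs i (orbit_sum F (unit_vec i)) = F"
proof
  fix x
  show "coeffs i (orbit_sum F (unit_vec i)) x = F x"
  proof (cases "x \<in> carrier G")
    case False
    then show ?thesis by (simp add: coeffs_def PiE_arb[OF F(1)])
  next
    case x: True
    have "coeffs i (orbit_sum F (unit_vec i)) x = (\<Sum>y\<in>carrier G. F (x \<otimes> y) * act y (unit_vec i) i)"
      using x by (simp add: coeffs_def act_orbit_sum orbit_sum_apply)
    also have "\<dots> = F x"
    proof (rule sum_idem_value[OF finite_carrier semifield_add_idem[OF semifield]])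
      show "\<forall>y\<in>carrier G. F (x \<otimes> y) * act y (unit_vec i) i = 0 \<or> F (x \<otimes> y) * act y (unit_vec i) i = F x"
        using x F(2) by (simp add: act_unit_vec_apply_self)
      show "F (x \<otimes> \<one>) * act \<one> (unit_vec i) i = F x"
        using x by (simp add: unit_vec_def)
    qed simp
    finally show ?thesis .
  qed
qed

lemma orbit_sum_add: "orbit_sum (\<lambda>x. F x + F' x) w = vadd (orbit_sum F w) (orbit_sum F' w)"
  by (simp add: fun_eq_iff orbit_sum_apply vadd_def distrib_right sum.distrib)

lemma orbit_sum_mult: "orbit_sum (\<lambda>x. c * F x) w = vsmult c (orbit_sum F w)"
  by (simp add: fun_eq_iff orbit_sum_apply vsmult_def sum_distrib_left mult.assoc)

lemma coeffs_vadd: "x \<in> carrier G \<Longrightarrow> coeffs i (vadd u v) x = coeffs i u x + coeffs i v x"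
  using klinear_vadd[OF act_klinear[OF inv_closed], of x u v] by (simp add: coeffs_def vadd_def)

lemma coeffs_vsmult: "x \<in> carrier G \<Longrightarrow> coeffs i (vsmult c v) x = c * coeffs i v x"
  using act_vsmult[OF inv_closed, of x c v] by (simp add: coeffs_def vsmult_def)

lemma orbit_sum_coeffs_hom:
  assumes W: "semifield_rep G actW"
  shows "(\<lambda>v. semifield_rep.orbit_sum G actW (coeffs i v) w) \<in> rep_homs G act actW"
proof -
  interpret W: semifield_rep G actW by (rule W)
  let ?\<phi> = "\<lambda>v. W.orbit_sum (coeffs i v) w"
  have "klinear ?\<phi>"
    unfolding klinear_def
    by (simp add: W.orbit_sum_cong[of "coeffs i (vadd _ _)"] coeffs_vadd W.orbit_sum_add
        W.orbit_sum_cong[of "coeffs i (vsmult _ _)"] coeffs_vsmult W.orbit_sum_mult)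
  moreover have "?\<phi> (act g v) = actW g (?\<phi> v)" if g: "g \<in> carrier G" for g v
    using g by (simp add: W.act_orbit_sum W.orbit_sum_cong[of "coeffs i (act g v)"] coeffs_act)
  ultimately show ?thesis by (simp add: rep_homs_def)
qed

end

section \<open>Indecomposable representations\<close>

locale indecomposable_semifield_rep = semifield_rep +
  assumes indecomposable: "indecomposable_rep G act"
begin

lemma stable_indices_eq_UNIV:
  assumes "stable_indices I" "i \<in> I"
  shows "I = UNIV"
proof (rule ccontr)
  assume "I \<noteq> UNIV"
  then obtain j where "j \<in> - I" by blast
  with assms have "Defs.submodule (coord_subspace I) \<and> Defs.submodule (coord_subspace (- I)) \<and>
      coord_subspace I \<noteq> {vzero} \<and> coord_subspace (- I) \<noteq> {vzero} \<and>
      G_stable G act (coord_subspace I) \<and> G_stable G act (coord_subspace (- I)) \<and>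
      is_direct_sum (coord_subspace I) (coord_subspace (- I))"
    by (simp add: submodule_coord_subspace coord_subspace_ne_zero G_stable_coord_subspace
        stable_indices_Compl is_direct_sum_coord_subspace)
  with indecomposable show False
    unfolding indecomposable_rep_def by blast
qed

lemma transitive_on_lines: "\<exists>g\<in>carrier G. \<exists>c. c \<noteq> 0 \<and> act g (unit_vec i) = vsmult c (unit_vec j)"
  using stable_indices_eq_UNIV[OF stable_indices_line_orbit self_in_line_orbit, of i]
  unfolding line_orbit_def by blast

text \<open>In the \<open>l\<close>-th coordinate every term equals \<open>v l\<close> or \<open>0\<close>, the former for each \<open>x\<close> moving the
  \<open>i\<close>-th basis line to the \<open>l\<close>-th one; idempotency of addition absorbs the repetitions.\<close>
lemma orbit_sum_coeffs: "orbit_sum (coeffs i v) (unit_vec i) = v"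
proof
  fix l
  have summand: "coeffs i v x * act x (unit_vec i) l = (if j = l then v l else 0)"
    if x: "x \<in> carrier G" and c: "c \<noteq> 0" "act x (unit_vec i) = vsmult c (unit_vec j)" for x c j
  proof -
    obtain c' where c': "c' \<noteq> 0" "c' * c = 1" "act (inv x) (unit_vec j) = vsmult c' (unit_vec i)"
      using act_inv_unit_vec[OF x c] by blast
    have "coeffs i v x = c' * v j"
      using x act_apply_monomial[OF _ c'(1,3)] by (simp add: coeffs_def)
    moreover have "c' * v l * c = (c' * c) * v l" by (simp only: ac_simps)
    ultimately show ?thesis using c(2) c'(2) by simp
  qed
  obtain x0 c0 where x0: "x0 \<in> carrier G" "c0 \<noteq> 0" "act x0 (unit_vec i) = vsmult c0 (unit_vec l)"
    using transitive_on_lines by blast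
  show "orbit_sum (coeffs i v) (unit_vec i) l = v l"
    unfolding orbit_sum_apply
  proof (rule sum_idem_value[OF finite_carrier semifield_add_idem[OF semifield]])
    show "\<forall>x\<in>carrier G. coeffs i v x * act x (unit_vec i) l = 0 \<or>
        coeffs i v x * act x (unit_vec i) l = v l"
      using summand act_unit_vec by (metis (full_types))
    show "coeffs i v x0 * act x0 (unit_vec i) l = v l"
      using summand[OF x0] by simp
  qed (rule x0(1))
qed

lemma bij_betw_coeffs_fixed_vectors:
  assumes H: "subgroup H G"
  shows "bij_betw (coeffs i) (fixed_vectors act H) (biinvariant_funs G H (line_stabilizer i))"
    (is "bij_betw _ _ ?B")
proof (rule bij_betw_byWitness[where f' = "\<lambda>F. orbit_sum F (unit_vec i)"])
  show "\<forall>w\<in>fixed_vectors act H. orbit_sum (coeffs i w) (unit_vec i) = w"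
    by (simp add: orbit_sum_coeffs)
  show "\<forall>F\<in>?B. coeffs i (orbit_sum F (unit_vec i)) = F"
  proof
    fix F assume "F \<in> ?B"
    then have "F \<in> carrier G \<rightarrow>\<^sub>E UNIV"
      "\<And>x k. x \<in> carrier G \<Longrightarrow> k \<in> line_stabilizer i \<Longrightarrow> F (\<one> \<otimes> x \<otimes> k) = F x"
      using subgroup.one_closed[OF H] by (auto simp: biinvariant_funs_def)
    then show "coeffs i (orbit_sum F (unit_vec i)) = F"
      by (intro coeffs_orbit_sum) simp_all
  qed
  have H_carrier: "H \<subseteq> carrier G" and stab_carrier: "line_stabilizer i \<subseteq> carrier G"
    using H subgroup_line_stabilizer subgroup.subset by blast+
  show "coeffs i ` fixed_vectors act H \<subseteq> ?B"
  proof
    fix F assume "F \<in> coeffs i ` fixed_vectors act H"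
    then obtain w where F: "F = coeffs i w" and w: "\<And>h. h \<in> H \<Longrightarrow> act h w = w"
      by (auto simp: fixed_vectors_def)
    have "F (h \<otimes> x \<otimes> k) = F x" if h: "h \<in> H" and x: "x \<in> carrier G"
      and k: "k \<in> line_stabilizer i" for h x k
    proof -
      have hk: "h \<in> carrier G" "k \<in> carrier G" using h k H_carrier stab_carrier by blast+
      have "F (h \<otimes> x \<otimes> k) = act (inv k) (act (inv x) (act (inv h) w)) i"
        using hk x by (simp add: F coeffs_def inv_mult_group act_mult)
      also have "\<dots> = F x"
        using x by (simp add: F coeffs_def w subgroup.m_inv_closed[OF H h]
            line_stabilizer_apply_self subgroup.m_inv_closed[OF subgroup_line_stabilizer k])
      finally show ?thesis .
    qed
    then show "F \<in> ?B"
      by (simp add: biinvariant_funs_def F coeffs_def)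
  qed
  show "(\<lambda>F. orbit_sum F (unit_vec i)) ` ?B \<subseteq> fixed_vectors act H"
  proof
    fix w assume "w \<in> (\<lambda>F. orbit_sum F (unit_vec i)) ` ?B"
    then obtain F where w: "w = orbit_sum F (unit_vec i)" and F: "F \<in> ?B"
      by blast
    have "act h w = w" if h: "h \<in> H" for h
    proof -
      have hG: "h \<in> carrier G" using h H_carrier by blast
      have "F (inv h \<otimes> x \<otimes> \<one>) = F x" if "x \<in> carrier G" for x
        using F that subgroup.m_inv_closed[OF H h] subgroup.one_closed[OF subgroup_line_stabilizer]
        unfolding biinvariant_funs_def by blast
      then have "F (inv h \<otimes> x) = F x" if "x \<in> carrier G" for x
        using that hG by simp
      then have "orbit_sum (\<lambda>x. F (inv h \<otimes> x)) (unit_vec i) = w"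
        unfolding w by (rule orbit_sum_cong)
      then show ?thesis by (simp add: w act_orbit_sum[OF hG])
    qed
    then show "w \<in> fixed_vectors act H" by (simp add: fixed_vectors_def)
  qed
qed

lemma bij_betw_rep_homs_fixed_vectors:
  assumes W: "semifield_rep G actW"
  shows "bij_betw (\<lambda>\<phi>. \<phi> (unit_vec i)) (rep_homs G act actW)
      (fixed_vectors actW (line_stabilizer i))"
proof -
  interpret W: semifield_rep G actW by (rule W)
  show ?thesis
  proof (rule bij_betw_byWitness[where f' = "\<lambda>w v. W.orbit_sum (coeffs i v) w"])
    show "\<forall>\<phi>\<in>rep_homs G act actW. (\<lambda>v. W.orbit_sum (coeffs i v) (\<phi> (unit_vec i))) = \<phi>"
    proof
      fix \<phi> assume "\<phi> \<in> rep_homs G act actW"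
      then have \<phi>: "klinear \<phi>" "\<And>g v. g \<in> carrier G \<Longrightarrow> \<phi> (act g v) = actW g (\<phi> v)"
        by (simp_all add: rep_homs_def)
      show "(\<lambda>v. W.orbit_sum (coeffs i v) (\<phi> (unit_vec i))) = \<phi>"
      proof
        fix v
        have "\<phi> v = vsum (\<lambda>x. vsmult (coeffs i v x) (\<phi> (act x (unit_vec i)))) (carrier G)"
          by (metis \<phi>(1) klinear_orbit_sum orbit_sum_coeffs)
        also have "\<dots> = W.orbit_sum (coeffs i v) (\<phi> (unit_vec i))"
          unfolding W.orbit_sum_def vsum_def by (simp add: \<phi>(2) cong: sum.cong)
        finally show "W.orbit_sum (coeffs i v) (\<phi> (unit_vec i)) = \<phi> v" by (rule sym)
      qed
    qed
    show "\<forall>w\<in>fixed_vectors actW (line_stabilizer i). W.orbit_sum (coeffs i (unit_vec i)) w = w"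
    proof (intro ballI ext)
      fix w l assume "w \<in> fixed_vectors actW (line_stabilizer i)"
      then have w: "\<And>h. h \<in> line_stabilizer i \<Longrightarrow> actW h w = w"
        by (simp add: fixed_vectors_def)
      have "W.orbit_sum (coeffs i (unit_vec i)) w l = (\<Sum>x\<in>carrier G. coeffs i (unit_vec i) x * actW x w l)"
        by (rule W.orbit_sum_apply)
      also have "\<dots> = w l"
      proof (rule sum_idem_value[OF finite_carrier semifield_add_idem[OF semifield]])
        show "\<forall>x\<in>carrier G. coeffs i (unit_vec i) x * actW x w l = 0 \<or>
            coeffs i (unit_vec i) x * actW x w l = w l"
        proof
          fix x assume x: "x \<in> carrier G"
          have "x \<in> line_stabilizer i" if "inv x \<in> line_stabilizer i"
            using subgroup.m_inv_closed[OF subgroup_line_stabilizer that] x by simp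
          with x w show "coeffs i (unit_vec i) x * actW x w l = 0 \<or>
              coeffs i (unit_vec i) x * actW x w l = w l"
            by (simp add: coeffs_def act_unit_vec_apply_self)
        qed
        show "coeffs i (unit_vec i) \<one> * actW \<one> w l = w l"
          by (simp add: coeffs_def unit_vec_def)
      qed simp
      finally show "W.orbit_sum (coeffs i (unit_vec i)) w l = w l" .
    qed
    show "(\<lambda>\<phi>. \<phi> (unit_vec i)) ` rep_homs G act actW \<subseteq> fixed_vectors actW (line_stabilizer i)"
    proof (clarsimp simp: fixed_vectors_def)
      fix \<phi> h assume "\<phi> \<in> rep_homs G act actW" and h: "h \<in> line_stabilizer i"
      moreover have "h \<in> carrier G"
        using h subgroup.subset[OF subgroup_line_stabilizer] by blast
      ultimately have "actW h (\<phi> (unit_vec i)) = \<phi> (act h (unit_vec i))"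
        by (simp add: rep_homs_def)
      then show "actW h (\<phi> (unit_vec i)) = \<phi> (unit_vec i)"
        by (simp add: line_stabilizer_fixes_unit_vec[OF h])
    qed
    show "(\<lambda>w v. W.orbit_sum (coeffs i v) w) ` fixed_vectors actW (line_stabilizer i) \<subseteq> rep_homs G act actW"
      using orbit_sum_coeffs_hom[OF W] by blast
  qed
qed

end

lemma indecomposable_semifield_repI:
  assumes "group G" "finite (carrier G)" "idempotent_semifield TYPE('k::comm_semiring_1)"
    and "indecomposable_rep G (act :: 'g \<Rightarrow> ('n::finite \<Rightarrow> 'k) \<Rightarrow> ('n \<Rightarrow> 'k))"
  shows "indecomposable_semifield_rep G act"
  using assms
  by (intro indecomposable_semifield_rep.intro semifield_rep.intro
      indecomposable_semifield_rep_axioms.intro semifield_rep_axioms.intro)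
    (simp_all add: indecomposable_rep_def)

theorem proposition3p20:
  fixes G :: "('g, 'b) monoid_scheme"
    and actV :: "'g \<Rightarrow> ('n::finite \<Rightarrow> 'k::comm_semiring_1) \<Rightarrow> ('n \<Rightarrow> 'k)"
    and actW :: "'g \<Rightarrow> ('m::finite \<Rightarrow> 'k) \<Rightarrow> ('m \<Rightarrow> 'k)"
    and HV HW :: "'g set"
  assumes "group G" and "finite (carrier G)"
    and "idempotent_semifield TYPE('k)"
    and "indecomposable_rep G actV" and "indecomposable_rep G actW"
    and "HV \<in> line_stabilizers G actV" and "HW \<in> line_stabilizers G actW"
  shows "\<exists>\<Phi>. bij_betw \<Phi> (rep_homs G actV actW) (double_cosets G HV HW \<rightarrow>\<^sub>E (UNIV :: 'k set))"
proof -
  interpret V: indecomposable_semifield_rep G actV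
    using assms(1-4) by (rule indecomposable_semifield_repI)
  interpret W: indecomposable_semifield_rep G actW
    using assms(1-3,5) by (rule indecomposable_semifield_repI)
  obtain i where HV: "HV = V.line_stabilizer i"
    using assms(6) unfolding line_stabilizers_def V.line_stabilizer_def by blast
  obtain j where HW: "HW = W.line_stabilizer j"
    using assms(7) unfolding line_stabilizers_def W.line_stabilizer_def by blast
  have "bij_betw (\<lambda>\<phi>. \<phi> (unit_vec i)) (rep_homs G actV actW) (fixed_vectors actW HV)"
    unfolding HV by (rule V.bij_betw_rep_homs_fixed_vectors[OF W.semifield_rep_axioms])
  moreover have "bij_betw (W.coeffs j) (fixed_vectors actW HV) (biinvariant_funs G HV HW)"
    unfolding HW HV by (rule W.bij_betw_coeffs_fixed_vectors[OF V.subgroup_line_stabilizer])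
  moreover have "bij_betw (\<lambda>Q. restrict (\<lambda>x. Q (double_coset G HV x HW)) (carrier G))
      (double_cosets G HV HW \<rightarrow>\<^sub>E (UNIV :: 'k set)) (biinvariant_funs G HV HW)"
    unfolding HV HW
    by (rule V.bij_betw_double_cosets_biinvariant_funs[OF V.subgroup_line_stabilizer W.subgroup_line_stabilizer])
  ultimately show ?thesis
    by (meson bij_betw_inv_into bij_betw_trans)
qed

end
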